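(* Let $R$ be a ring and $G$ a group such that the group ring $RG$ is a DT ring. Then $1-g^2\in\Delta(RG)$ for every $g\in G$.
   Context: All rings are associative with identity; $U(R)$ is the group of units. $\Delta(R)=\{x\in R: x+u\in U(R)\text{ for all }u\in U(R)\}$. $\mathrm{Tr}(R)=\{x\in R: x^3=x\}$. A ring $R$ is a DT ring if every $r\in R$ can be written $r=e+d$ with $e\in\mathrm{Tr}(R)$ and $d\in\Delta(R)$. $RG$ denotes the group ring. *)

theory Defs
  imports "HOL-Algebra.Algebra"
begin

text \<open>The group ring RG of a ring R over a (not necessarily finite) group G:
  finitely supported functions from carrier G to carrier R (taking the value zero
  outside carrier G), with pointwise addition and convolution product.\<close>

definition group_ring :: "('r, 'a) ring_scheme \<Rightarrow> ('g, 'b) monoid_scheme \<Rightarrow> ('g \<Rightarrow> 'r) ring" where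
  "group_ring R G =
    \<lparr> carrier = {f. (\<forall>x\<in>carrier G. f x \<in> carrier R)
                   \<and> (\<forall>x. x \<notin> carrier G \<longrightarrow> f x = \<zero>\<^bsub>R\<^esub>)
                   \<and> finite {x \<in> carrier G. f x \<noteq> \<zero>\<^bsub>R\<^esub>}},
      monoid.mult = (\<lambda>f h x. if x \<in> carrier G then
          (\<Oplus>\<^bsub>R\<^esub> a \<in> {a \<in> carrier G. f a \<noteq> \<zero>\<^bsub>R\<^esub>}. f a \<otimes>\<^bsub>R\<^esub> h (inv\<^bsub>G\<^esub> a \<otimes>\<^bsub>G\<^esub> x))
          else \<zero>\<^bsub>R\<^esub>),
      monoid.one = (\<lambda>x. if x = \<one>\<^bsub>G\<^esub> then \<one>\<^bsub>R\<^esub> else \<zero>\<^bsub>R\<^esub>),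
      ring.zero = (\<lambda>x. \<zero>\<^bsub>R\<^esub>),
      ring.add = (\<lambda>f h x. f x \<oplus>\<^bsub>R\<^esub> h x) \<rparr>"

definition gr_elem :: "('r, 'a) ring_scheme \<Rightarrow> 'g \<Rightarrow> ('g \<Rightarrow> 'r)" where
  "gr_elem R g = (\<lambda>x. if x = g then \<one>\<^bsub>R\<^esub> else \<zero>\<^bsub>R\<^esub>)"

definition Delta :: "('a, 'b) ring_scheme \<Rightarrow> 'a set" where
  "Delta S = {x \<in> carrier S. \<forall>u \<in> Units S. x \<oplus>\<^bsub>S\<^esub> u \<in> Units S}"

definition Tr :: "('a, 'b) ring_scheme \<Rightarrow> 'a set" where
  "Tr S = {x \<in> carrier S. x [^]\<^bsub>S\<^esub> (3::nat) = x}"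

definition DT_ring :: "('a, 'b) ring_scheme \<Rightarrow> bool" where
  "DT_ring S \<longleftrightarrow> (\<forall>r \<in> carrier S. \<exists>e \<in> Tr S. \<exists>d \<in> Delta S. r = e \<oplus>\<^bsub>S\<^esub> d)"

end

theory Submission
  imports Defs
begin

(* Every group element g is a unit of RG, so it suffices to show that 1 - u^2 lies in Delta
   for every unit u of a DT ring.  Write u = e + d with e^3 = e and d in Delta.  Since Delta + U
   is contained in U, e = u - d is a unit, and then e^3 = e forces e^2 = 1.  Hence
   u^2 - 1 = d e + u d, which lies in Delta because Delta is closed under addition and under
   multiplication by units on either side. *)

lemma (in comm_monoid) finprod_swap:
  assumes "finite A" "finite B" "\<And>a b. a \<in> A \<Longrightarrow> b \<in> B \<Longrightarrow> f a b \<in> carrier G"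
  shows "(\<Otimes>a\<in>A. \<Otimes>b\<in>B. f a b) = (\<Otimes>b\<in>B. \<Otimes>a\<in>A. f a b)"
  using assms
proof (induction A rule: finite_induct)
  case empty
  then show ?case by simp
next
  case (insert x F)
  then have "(\<Otimes>a\<in>insert x F. \<Otimes>b\<in>B. f a b) = (\<Otimes>b\<in>B. f x b) \<otimes> (\<Otimes>b\<in>B. \<Otimes>a\<in>F. f a b)"
    by (simp add: Pi_iff)
  also have "\<dots> = (\<Otimes>b\<in>B. f x b \<otimes> (\<Otimes>a\<in>F. f a b))"
    using insert.prems by (simp add: Pi_iff)
  also have "\<dots> = (\<Otimes>b\<in>B. \<Otimes>a\<in>insert x F. f a b)"
    using insert by (intro finprod_cong') (auto simp: Pi_iff)
  finally show ?case .
qed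

context ring
begin

lemma Delta_closed: "d \<in> Delta R \<Longrightarrow> d \<in> carrier R"
  by (simp add: Delta_def)

lemma Delta_add_Units: "d \<in> Delta R \<Longrightarrow> v \<in> Units R \<Longrightarrow> d \<oplus> v \<in> Units R"
  by (simp add: Delta_def)

lemma DeltaI:
  "x \<in> carrier R \<Longrightarrow> (\<And>v. v \<in> Units R \<Longrightarrow> x \<oplus> v \<in> Units R) \<Longrightarrow> x \<in> Delta R"
  by (simp add: Delta_def)

lemma Delta_add_closed:
  assumes d1: "d1 \<in> Delta R" and d2: "d2 \<in> Delta R"
  shows "d1 \<oplus> d2 \<in> Delta R"
proof -
  have "d1 \<oplus> d2 \<oplus> v \<in> Units R" if v: "v \<in> Units R" for v
  proof -
    have "d1 \<oplus> d2 \<oplus> v = d1 \<oplus> (d2 \<oplus> v)"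
      using d1 d2 v by (simp add: a_assoc Delta_closed Units_closed)
    also have "\<dots> \<in> Units R" using d1 d2 v by (simp add: Delta_add_Units)
    finally show ?thesis .
  qed
  then show ?thesis using d1 d2 by (simp add: DeltaI Delta_closed)
qed

lemma Delta_Units_mult_closed:
  assumes d: "d \<in> Delta R" and w: "w \<in> Units R"
  shows "w \<otimes> d \<in> Delta R"
proof -
  have "w \<otimes> d \<oplus> v \<in> Units R" if v: "v \<in> Units R" for v
  proof -
    have "w \<otimes> d \<oplus> v = w \<otimes> (d \<oplus> inv w \<otimes> v)"
      using d v w by (simp add: r_distr m_assoc[symmetric] Delta_closed Units_closed)
    also have "\<dots> \<in> Units R" using d v w by (simp add: Delta_add_Units)
    finally show ?thesis .
  qed
  then show ?thesis using d w by (simp add: DeltaI Delta_closed Units_closed)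
qed

lemma Delta_mult_Units_closed:
  assumes d: "d \<in> Delta R" and w: "w \<in> Units R"
  shows "d \<otimes> w \<in> Delta R"
proof -
  have "d \<otimes> w \<oplus> v \<in> Units R" if v: "v \<in> Units R" for v
  proof -
    have "d \<otimes> w \<oplus> v = (d \<oplus> v \<otimes> inv w) \<otimes> w"
      using d v w by (simp add: l_distr m_assoc Delta_closed Units_closed)
    also have "\<dots> \<in> Units R" using d v w by (simp add: Delta_add_Units)
    finally show ?thesis .
  qed
  then show ?thesis using d w by (simp add: DeltaI Delta_closed Units_closed)
qed

lemma Delta_a_inv_closed: "d \<in> Delta R \<Longrightarrow> \<ominus> d \<in> Delta R"
  using Delta_Units_mult_closed[OF _ Units_minus_one_closed]
  by (simp add: l_minus Delta_closed)

lemma Tr_Units_square_eq_one: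
  assumes e: "e \<in> Tr R" and eU: "e \<in> Units R"
  shows "e \<otimes> e = \<one>"
proof -
  have ec: "e \<in> carrier R" using eU by (rule Units_closed)
  have "e \<otimes> e \<otimes> e = e" using e ec by (simp add: Tr_def numeral_3_eq_3)
  then have "e \<otimes> (e \<otimes> e) = e \<otimes> \<one>" using ec by (simp add: m_assoc)
  then show ?thesis using eU ec by (simp only: Units_l_cancel m_closed one_closed)
qed

lemma DT_ring_one_minus_Units_square:
  assumes DT: "DT_ring R" and u: "u \<in> Units R"
  shows "\<one> \<ominus> u \<otimes> u \<in> Delta R"
proof -
  have uc: "u \<in> carrier R" using u by (rule Units_closed)
  obtain e d where e: "e \<in> Tr R" and d: "d \<in> Delta R" and u_eq: "u = e \<oplus> d"
    using DT uc unfolding DT_ring_def by blast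
  have ec: "e \<in> carrier R" and dc: "d \<in> carrier R" using e d by (auto simp: Tr_def Delta_closed)
  have "e = \<ominus> d \<oplus> u" using u_eq ec dc by (simp add: a_comm r_neg1)
  also have "\<dots> \<in> Units R" using d u by (simp add: Delta_add_Units Delta_a_inv_closed)
  finally have eU: "e \<in> Units R" .
  define x where "x = d \<otimes> e \<oplus> u \<otimes> d"
  have xc: "x \<in> carrier R" using ec dc uc by (simp add: x_def)
  have "u \<otimes> u = u \<otimes> e \<oplus> u \<otimes> d"
    using r_distr[OF ec dc uc] by (simp flip: u_eq)
  also have "\<dots> = (e \<otimes> e \<oplus> d \<otimes> e) \<oplus> u \<otimes> d"
    using l_distr[OF ec dc ec] by (simp flip: u_eq)
  also have "\<dots> = e \<otimes> e \<oplus> x"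
    using ec dc uc by (simp add: x_def a_assoc)
  also have "\<dots> = \<one> \<oplus> x" using e eU by (simp add: Tr_Units_square_eq_one)
  finally have "\<one> \<ominus> u \<otimes> u = \<ominus> x"
    using xc by (simp add: a_minus_def minus_add r_neg2)
  moreover have "x \<in> Delta R"
    unfolding x_def using d eU u
    by (intro Delta_add_closed Delta_mult_Units_closed Delta_Units_mult_closed)
  ultimately show ?thesis by (simp add: Delta_a_inv_closed)
qed

end

locale ring_over_group = R: ring R + G: group G
  for R :: "('r, 'a) ring_scheme" and G :: "('g, 'b) monoid_scheme"
begin

abbreviation RG where "RG \<equiv> group_ring R G"

definition supp :: "('g \<Rightarrow> 'r) \<Rightarrow> 'g set" where
  "supp f = {x \<in> carrier G. f x \<noteq> \<zero>\<^bsub>R\<^esub>}"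

lemma group_ring_carrier_iff:
  "f \<in> carrier RG \<longleftrightarrow>
     (\<forall>x\<in>carrier G. f x \<in> carrier R) \<and> (\<forall>x. x \<notin> carrier G \<longrightarrow> f x = \<zero>\<^bsub>R\<^esub>) \<and> finite (supp f)"
  by (simp add: group_ring_def supp_def)

lemma group_ring_carrierI:
  assumes "\<And>x. x \<in> carrier G \<Longrightarrow> f x \<in> carrier R"
    and "\<And>x. x \<notin> carrier G \<Longrightarrow> f x = \<zero>\<^bsub>R\<^esub>" and "finite (supp f)"
  shows "f \<in> carrier RG"
  using assms by (simp add: group_ring_carrier_iff)

lemma group_ring_mult:
  "f \<otimes>\<^bsub>RG\<^esub> h = (\<lambda>x. if x \<in> carrier G
     then (\<Oplus>\<^bsub>R\<^esub> a \<in> supp f. f a \<otimes>\<^bsub>R\<^esub> h (inv\<^bsub>G\<^esub> a \<otimes>\<^bsub>G\<^esub> x)) else \<zero>\<^bsub>R\<^esub>)"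
  unfolding supp_def group_ring_def by simp

lemma group_ring_add: "f \<oplus>\<^bsub>RG\<^esub> h = (\<lambda>x. f x \<oplus>\<^bsub>R\<^esub> h x)"
  by (simp add: group_ring_def)

lemma group_ring_zero: "\<zero>\<^bsub>RG\<^esub> = (\<lambda>x. \<zero>\<^bsub>R\<^esub>)"
  by (simp add: group_ring_def)

lemma group_ring_one: "\<one>\<^bsub>RG\<^esub> = gr_elem R \<one>\<^bsub>G\<^esub>"
  by (simp add: group_ring_def gr_elem_def)

lemma supp_subset_carrier: "supp f \<subseteq> carrier G"
  by (auto simp: supp_def)

lemma group_ring_closed: "f \<in> carrier RG \<Longrightarrow> f x \<in> carrier R"
  by (cases "x \<in> carrier G") (auto simp: group_ring_carrier_iff)

lemma group_ring_outside: "f \<in> carrier RG \<Longrightarrow> x \<notin> carrier G \<Longrightarrow> f x = \<zero>\<^bsub>R\<^esub>"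
  by (simp add: group_ring_carrier_iff)

lemma finite_supp: "f \<in> carrier RG \<Longrightarrow> finite (supp f)"
  by (simp add: group_ring_carrier_iff)

lemma group_ring_eqI:
  assumes "f \<in> carrier RG" "h \<in> carrier RG" "\<And>x. x \<in> carrier G \<Longrightarrow> f x = h x"
  shows "f = h"
  using assms by (metis group_ring_outside ext)

lemma group_ring_mult_apply:
  assumes f: "f \<in> carrier RG" and h: "h \<in> carrier RG"
    and A: "finite A" "supp f \<subseteq> A" "A \<subseteq> carrier G" and x: "x \<in> carrier G"
  shows "(f \<otimes>\<^bsub>RG\<^esub> h) x = (\<Oplus>\<^bsub>R\<^esub> a \<in> A. f a \<otimes>\<^bsub>R\<^esub> h (inv\<^bsub>G\<^esub> a \<otimes>\<^bsub>G\<^esub> x))"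
proof -
  have "(f \<otimes>\<^bsub>RG\<^esub> h) x = (\<Oplus>\<^bsub>R\<^esub> a \<in> supp f. f a \<otimes>\<^bsub>R\<^esub> h (inv\<^bsub>G\<^esub> a \<otimes>\<^bsub>G\<^esub> x))"
    using x by (simp add: group_ring_mult)
  also have "\<dots> = (\<Oplus>\<^bsub>R\<^esub> a \<in> A. f a \<otimes>\<^bsub>R\<^esub> h (inv\<^bsub>G\<^esub> a \<otimes>\<^bsub>G\<^esub> x))"
  proof (rule R.add.finprod_mono_neutral_cong_left[OF A(1,2)])
    show "f a \<otimes>\<^bsub>R\<^esub> h (inv\<^bsub>G\<^esub> a \<otimes>\<^bsub>G\<^esub> x) = \<zero>\<^bsub>R\<^esub>" if "a \<in> A - supp f" for a
      using that A(3) h x by (auto simp: supp_def group_ring_closed)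
    show "(\<lambda>a. f a \<otimes>\<^bsub>R\<^esub> h (inv\<^bsub>G\<^esub> a \<otimes>\<^bsub>G\<^esub> x)) \<in> A \<rightarrow> carrier R"
      using f h by (simp add: group_ring_closed)
  qed simp
  finally show ?thesis .
qed

lemma gr_elem_closed: "g \<in> carrier G \<Longrightarrow> gr_elem R g \<in> carrier RG"
  by (intro group_ring_carrierI) (auto simp: gr_elem_def supp_def)

lemma group_ring_one_closed: "\<one>\<^bsub>RG\<^esub> \<in> carrier RG"
  by (simp add: group_ring_one gr_elem_closed)

lemma gr_elem_mult_apply:
  assumes g: "g \<in> carrier G" and f: "f \<in> carrier RG" and x: "x \<in> carrier G"
  shows "(gr_elem R g \<otimes>\<^bsub>RG\<^esub> f) x = f (inv\<^bsub>G\<^esub> g \<otimes>\<^bsub>G\<^esub> x)"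
proof -
  have "(gr_elem R g \<otimes>\<^bsub>RG\<^esub> f) x = (\<Oplus>\<^bsub>R\<^esub> a \<in> {g}. gr_elem R g a \<otimes>\<^bsub>R\<^esub> f (inv\<^bsub>G\<^esub> a \<otimes>\<^bsub>G\<^esub> x))"
    using g f x by (intro group_ring_mult_apply gr_elem_closed) (auto simp: supp_def gr_elem_def)
  then show ?thesis using g f x by (simp add: gr_elem_def group_ring_closed)
qed

lemma group_ring_add_closed:
  assumes f: "f \<in> carrier RG" and h: "h \<in> carrier RG"
  shows "f \<oplus>\<^bsub>RG\<^esub> h \<in> carrier RG"
proof -
  have "supp (f \<oplus>\<^bsub>RG\<^esub> h) \<subseteq> supp f \<union> supp h"
    using f h by (auto simp: supp_def group_ring_add group_ring_closed)
  then have "finite (supp (f \<oplus>\<^bsub>RG\<^esub> h))"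
    using f h by (meson finite_UnI finite_subset finite_supp)
  then show ?thesis
    using f h
    by (intro group_ring_carrierI) (simp_all add: group_ring_add group_ring_closed group_ring_outside)
qed

lemma abelian_group_group_ring: "abelian_group RG"
proof (rule abelian_groupI)
  show "\<zero>\<^bsub>RG\<^esub> \<in> carrier RG"
    by (intro group_ring_carrierI) (simp_all add: group_ring_zero supp_def)
  show "\<exists>h\<in>carrier RG. h \<oplus>\<^bsub>RG\<^esub> f = \<zero>\<^bsub>RG\<^esub>" if f: "f \<in> carrier RG" for f
  proof
    have "supp (\<lambda>x. \<ominus>\<^bsub>R\<^esub> f x) = supp f"
      using f by (auto simp: supp_def group_ring_closed)
    then show "(\<lambda>x. \<ominus>\<^bsub>R\<^esub> f x) \<in> carrier RG"
      using f
      by (intro group_ring_carrierI) (simp_all add: group_ring_closed group_ring_outside finite_supp)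
    show "(\<lambda>x. \<ominus>\<^bsub>R\<^esub> f x) \<oplus>\<^bsub>RG\<^esub> f = \<zero>\<^bsub>RG\<^esub>"
      using f by (simp add: group_ring_add group_ring_zero group_ring_closed R.l_neg)
  qed
  show "(f \<oplus>\<^bsub>RG\<^esub> h) \<oplus>\<^bsub>RG\<^esub> k = f \<oplus>\<^bsub>RG\<^esub> (h \<oplus>\<^bsub>RG\<^esub> k)"
    if "f \<in> carrier RG" "h \<in> carrier RG" "k \<in> carrier RG" for f h k
    using that by (simp add: group_ring_add group_ring_closed R.a_assoc)
  show "f \<oplus>\<^bsub>RG\<^esub> h = h \<oplus>\<^bsub>RG\<^esub> f" if "f \<in> carrier RG" "h \<in> carrier RG" for f h
    using that by (simp add: group_ring_add group_ring_closed R.a_comm)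
  show "\<zero>\<^bsub>RG\<^esub> \<oplus>\<^bsub>RG\<^esub> f = f" if "f \<in> carrier RG" for f
    using that by (simp add: group_ring_add group_ring_zero group_ring_closed)
qed (rule group_ring_add_closed)

lemma supp_mult_subset:
  assumes f: "f \<in> carrier RG"
  shows "supp (f \<otimes>\<^bsub>RG\<^esub> h) \<subseteq> supp f <#>\<^bsub>G\<^esub> supp h"
proof
  fix x assume x: "x \<in> supp (f \<otimes>\<^bsub>RG\<^esub> h)"
  then have xG: "x \<in> carrier G" by (simp add: supp_def)
  show "x \<in> supp f <#>\<^bsub>G\<^esub> supp h"
  proof (rule ccontr)
    assume x_notin: "x \<notin> supp f <#>\<^bsub>G\<^esub> supp h"
    have "f a \<otimes>\<^bsub>R\<^esub> h (inv\<^bsub>G\<^esub> a \<otimes>\<^bsub>G\<^esub> x) = \<zero>\<^bsub>R\<^esub>" if a: "a \<in> supp f" for a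
    proof -
      have aG: "a \<in> carrier G" using a by (simp add: supp_def)
      then have "x = a \<otimes>\<^bsub>G\<^esub> (inv\<^bsub>G\<^esub> a \<otimes>\<^bsub>G\<^esub> x)"
        using xG by (simp add: G.m_assoc[symmetric])
      then have "inv\<^bsub>G\<^esub> a \<otimes>\<^bsub>G\<^esub> x \<notin> supp h"
        using a x_notin unfolding set_mult_def by blast
      then show ?thesis using aG xG f by (simp add: supp_def group_ring_closed)
    qed
    then have "(f \<otimes>\<^bsub>RG\<^esub> h) x = \<zero>\<^bsub>R\<^esub>"
      using xG by (simp add: group_ring_mult R.add.finprod_one_eqI)
    then show False using x by (simp add: supp_def)
  qed
qed

lemma finite_supp_mult:
  "f \<in> carrier RG \<Longrightarrow> h \<in> carrier RG \<Longrightarrow> finite (supp f <#>\<^bsub>G\<^esub> supp h)"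
  by (simp add: set_mult_def finite_supp)

lemma group_ring_mult_closed:
  assumes f: "f \<in> carrier RG" and h: "h \<in> carrier RG"
  shows "f \<otimes>\<^bsub>RG\<^esub> h \<in> carrier RG"
proof -
  have "finite (supp (f \<otimes>\<^bsub>RG\<^esub> h))"
    using supp_mult_subset[OF f] finite_supp_mult[OF f h] by (rule finite_subset)
  then show ?thesis
    using f h by (intro group_ring_carrierI) (simp_all add: group_ring_mult group_ring_closed)
qed

lemma group_ring_l_one: "f \<in> carrier RG \<Longrightarrow> \<one>\<^bsub>RG\<^esub> \<otimes>\<^bsub>RG\<^esub> f = f"
  by (intro group_ring_eqI group_ring_mult_closed group_ring_one_closed)
    (simp_all add: group_ring_one gr_elem_mult_apply)

lemma group_ring_r_one:
  assumes f: "f \<in> carrier RG"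
  shows "f \<otimes>\<^bsub>RG\<^esub> \<one>\<^bsub>RG\<^esub> = f"
proof (rule group_ring_eqI)
  fix x assume x: "x \<in> carrier G"
  have A: "finite (insert x (supp f))" "insert x (supp f) \<subseteq> carrier G"
    using f x supp_subset_carrier by (auto simp: finite_supp)
  have "(f \<otimes>\<^bsub>RG\<^esub> \<one>\<^bsub>RG\<^esub>) x =
      (\<Oplus>\<^bsub>R\<^esub> a \<in> insert x (supp f). f a \<otimes>\<^bsub>R\<^esub> \<one>\<^bsub>RG\<^esub> (inv\<^bsub>G\<^esub> a \<otimes>\<^bsub>G\<^esub> x))"
    using f x A by (intro group_ring_mult_apply group_ring_one_closed) auto
  also have "\<dots> = (\<Oplus>\<^bsub>R\<^esub> a \<in> insert x (supp f). if x = a then f a else \<zero>\<^bsub>R\<^esub>)"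
  proof (rule R.finsum_cong')
    fix a assume "a \<in> insert x (supp f)"
    then have aG: "a \<in> carrier G" using A by blast
    have "inv\<^bsub>G\<^esub> a \<otimes>\<^bsub>G\<^esub> x = \<one>\<^bsub>G\<^esub> \<longleftrightarrow> x = a"
      using aG x by (metis G.inv_solve_left G.one_closed G.r_one)
    then show "f a \<otimes>\<^bsub>R\<^esub> \<one>\<^bsub>RG\<^esub> (inv\<^bsub>G\<^esub> a \<otimes>\<^bsub>G\<^esub> x) = (if x = a then f a else \<zero>\<^bsub>R\<^esub>)"
      using f by (auto simp: group_ring_one gr_elem_def group_ring_closed)
  qed (auto simp: f group_ring_closed)
  also have "\<dots> = f x"
    using A f by (intro R.finsum_singleton) (auto simp: group_ring_closed)
  finally show "(f \<otimes>\<^bsub>RG\<^esub> \<one>\<^bsub>RG\<^esub>) x = f x" .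
qed (simp_all add: f group_ring_mult_closed group_ring_one_closed)

lemma mult_apply_translate:
  assumes h: "h \<in> carrier RG" and k: "k \<in> carrier RG"
    and b: "b \<in> carrier G" and x: "x \<in> carrier G"
    and A: "finite A" "A \<subseteq> carrier G" "b <#\<^bsub>G\<^esub> supp h \<subseteq> A"
  shows "(h \<otimes>\<^bsub>RG\<^esub> k) (inv\<^bsub>G\<^esub> b \<otimes>\<^bsub>G\<^esub> x) =
    (\<Oplus>\<^bsub>R\<^esub> a \<in> A. h (inv\<^bsub>G\<^esub> b \<otimes>\<^bsub>G\<^esub> a) \<otimes>\<^bsub>R\<^esub> k (inv\<^bsub>G\<^esub> a \<otimes>\<^bsub>G\<^esub> x))"
proof -
  let ?t = "\<lambda>a. inv\<^bsub>G\<^esub> b \<otimes>\<^bsub>G\<^esub> a"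
  have supp_h: "supp h \<subseteq> ?t ` A"
  proof
    fix c assume c: "c \<in> supp h"
    then have "c \<in> carrier G" by (simp add: supp_def)
    then have "c = ?t (b \<otimes>\<^bsub>G\<^esub> c)" using b by (simp add: G.m_assoc[symmetric])
    moreover have "b \<otimes>\<^bsub>G\<^esub> c \<in> A" using c A(3) by (auto simp: l_coset_def)
    ultimately show "c \<in> ?t ` A" by blast
  qed
  have inj: "inj_on ?t A"
    using A(2) b by (auto simp: inj_on_def subset_iff)
  have "(h \<otimes>\<^bsub>RG\<^esub> k) (?t x) =
      (\<Oplus>\<^bsub>R\<^esub> c \<in> ?t ` A. h c \<otimes>\<^bsub>R\<^esub> k (inv\<^bsub>G\<^esub> c \<otimes>\<^bsub>G\<^esub> ?t x))"
    using A b x by (intro group_ring_mult_apply h k supp_h) auto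
  also have "\<dots> = (\<Oplus>\<^bsub>R\<^esub> a \<in> A. h (?t a) \<otimes>\<^bsub>R\<^esub> k (inv\<^bsub>G\<^esub> (?t a) \<otimes>\<^bsub>G\<^esub> ?t x))"
    using inj h k by (intro R.finsum_reindex) (auto simp: group_ring_closed)
  also have "\<dots> = (\<Oplus>\<^bsub>R\<^esub> a \<in> A. h (?t a) \<otimes>\<^bsub>R\<^esub> k (inv\<^bsub>G\<^esub> a \<otimes>\<^bsub>G\<^esub> x))"
  proof (rule R.finsum_cong')
    fix a assume "a \<in> A"
    then have aG: "a \<in> carrier G" using A(2) by blast
    have "b \<otimes>\<^bsub>G\<^esub> ?t x = x" using b x by (simp add: G.m_assoc[symmetric])
    then have "inv\<^bsub>G\<^esub> (?t a) \<otimes>\<^bsub>G\<^esub> ?t x = inv\<^bsub>G\<^esub> a \<otimes>\<^bsub>G\<^esub> x"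
      using aG b x by (simp add: G.inv_mult_group G.m_assoc)
    then show "h (?t a) \<otimes>\<^bsub>R\<^esub> k (inv\<^bsub>G\<^esub> (?t a) \<otimes>\<^bsub>G\<^esub> ?t x) = h (?t a) \<otimes>\<^bsub>R\<^esub> k (inv\<^bsub>G\<^esub> a \<otimes>\<^bsub>G\<^esub> x)"
      by simp
  qed (auto simp: h k group_ring_closed)
  finally show ?thesis .
qed

lemma group_ring_mult_assoc:
  assumes f: "f \<in> carrier RG" and h: "h \<in> carrier RG" and k: "k \<in> carrier RG"
  shows "f \<otimes>\<^bsub>RG\<^esub> h \<otimes>\<^bsub>RG\<^esub> k = f \<otimes>\<^bsub>RG\<^esub> (h \<otimes>\<^bsub>RG\<^esub> k)"
proof (rule group_ring_eqI)
  fix x assume x: "x \<in> carrier G"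
  define A where "A = supp f <#>\<^bsub>G\<^esub> supp h"
  define B where "B = supp f"
  have A: "finite A" "A \<subseteq> carrier G"
    using f h finite_supp_mult G.set_mult_closed supp_subset_carrier by (auto simp: A_def)
  have B: "finite B" "B \<subseteq> carrier G"
    using f finite_supp supp_subset_carrier by (auto simp: B_def)
  have "(f \<otimes>\<^bsub>RG\<^esub> h \<otimes>\<^bsub>RG\<^esub> k) x =
      (\<Oplus>\<^bsub>R\<^esub> a \<in> A. (f \<otimes>\<^bsub>RG\<^esub> h) a \<otimes>\<^bsub>R\<^esub> k (inv\<^bsub>G\<^esub> a \<otimes>\<^bsub>G\<^esub> x))"
    using f h k x A supp_mult_subset[OF f] by (intro group_ring_mult_apply group_ring_mult_closed) (auto simp: A_def)
  also have "\<dots> = (\<Oplus>\<^bsub>R\<^esub> a \<in> A. \<Oplus>\<^bsub>R\<^esub> b \<in> B.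
      f b \<otimes>\<^bsub>R\<^esub> (h (inv\<^bsub>G\<^esub> b \<otimes>\<^bsub>G\<^esub> a) \<otimes>\<^bsub>R\<^esub> k (inv\<^bsub>G\<^esub> a \<otimes>\<^bsub>G\<^esub> x)))"
  proof (rule R.finsum_cong')
    fix a assume "a \<in> A"
    then have "(f \<otimes>\<^bsub>RG\<^esub> h) a = (\<Oplus>\<^bsub>R\<^esub> b \<in> B. f b \<otimes>\<^bsub>R\<^esub> h (inv\<^bsub>G\<^esub> b \<otimes>\<^bsub>G\<^esub> a))"
      using f h A B by (intro group_ring_mult_apply) (auto simp: B_def)
    then show "(f \<otimes>\<^bsub>RG\<^esub> h) a \<otimes>\<^bsub>R\<^esub> k (inv\<^bsub>G\<^esub> a \<otimes>\<^bsub>G\<^esub> x) = (\<Oplus>\<^bsub>R\<^esub> b \<in> B.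
        f b \<otimes>\<^bsub>R\<^esub> (h (inv\<^bsub>G\<^esub> b \<otimes>\<^bsub>G\<^esub> a) \<otimes>\<^bsub>R\<^esub> k (inv\<^bsub>G\<^esub> a \<otimes>\<^bsub>G\<^esub> x)))"
      using B f h k by (simp add: R.finsum_ldistr group_ring_closed R.m_assoc)
  qed (auto simp: f h k group_ring_closed)
  also have "\<dots> = (\<Oplus>\<^bsub>R\<^esub> b \<in> B. \<Oplus>\<^bsub>R\<^esub> a \<in> A.
      f b \<otimes>\<^bsub>R\<^esub> (h (inv\<^bsub>G\<^esub> b \<otimes>\<^bsub>G\<^esub> a) \<otimes>\<^bsub>R\<^esub> k (inv\<^bsub>G\<^esub> a \<otimes>\<^bsub>G\<^esub> x)))"
    using A B f h k by (intro R.add.finprod_swap) (auto simp: group_ring_closed)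
  also have "\<dots> = (\<Oplus>\<^bsub>R\<^esub> b \<in> B. f b \<otimes>\<^bsub>R\<^esub> (h \<otimes>\<^bsub>RG\<^esub> k) (inv\<^bsub>G\<^esub> b \<otimes>\<^bsub>G\<^esub> x))"
  proof (rule R.finsum_cong')
    fix b assume b: "b \<in> B"
    have "b <#\<^bsub>G\<^esub> supp h \<subseteq> A"
      using b by (auto simp: A_def B_def l_coset_def set_mult_def)
    then have "(h \<otimes>\<^bsub>RG\<^esub> k) (inv\<^bsub>G\<^esub> b \<otimes>\<^bsub>G\<^esub> x) =
        (\<Oplus>\<^bsub>R\<^esub> a \<in> A. h (inv\<^bsub>G\<^esub> b \<otimes>\<^bsub>G\<^esub> a) \<otimes>\<^bsub>R\<^esub> k (inv\<^bsub>G\<^esub> a \<otimes>\<^bsub>G\<^esub> x))"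
      using b B A x by (intro mult_apply_translate h k) auto
    then show "(\<Oplus>\<^bsub>R\<^esub> a \<in> A. f b \<otimes>\<^bsub>R\<^esub> (h (inv\<^bsub>G\<^esub> b \<otimes>\<^bsub>G\<^esub> a) \<otimes>\<^bsub>R\<^esub> k (inv\<^bsub>G\<^esub> a \<otimes>\<^bsub>G\<^esub> x))) =
        f b \<otimes>\<^bsub>R\<^esub> (h \<otimes>\<^bsub>RG\<^esub> k) (inv\<^bsub>G\<^esub> b \<otimes>\<^bsub>G\<^esub> x)"
      using A f h k by (simp add: R.finsum_rdistr group_ring_closed)
  qed (auto simp: f h k group_ring_mult_closed group_ring_closed)
  also have "\<dots> = (f \<otimes>\<^bsub>RG\<^esub> (h \<otimes>\<^bsub>RG\<^esub> k)) x"
    using f h k x B by (intro group_ring_mult_apply[symmetric] group_ring_mult_closed) (auto simp: B_def)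
  finally show "(f \<otimes>\<^bsub>RG\<^esub> h \<otimes>\<^bsub>RG\<^esub> k) x = (f \<otimes>\<^bsub>RG\<^esub> (h \<otimes>\<^bsub>RG\<^esub> k)) x" .
qed (simp_all add: f h k group_ring_mult_closed)

lemma group_ring_l_distr:
  assumes f: "f \<in> carrier RG" and h: "h \<in> carrier RG" and k: "k \<in> carrier RG"
  shows "(f \<oplus>\<^bsub>RG\<^esub> h) \<otimes>\<^bsub>RG\<^esub> k = f \<otimes>\<^bsub>RG\<^esub> k \<oplus>\<^bsub>RG\<^esub> h \<otimes>\<^bsub>RG\<^esub> k"
proof (rule group_ring_eqI)
  fix x assume x: "x \<in> carrier G"
  define A where "A = supp f \<union> supp h"
  have A: "finite A" "A \<subseteq> carrier G"
    using f h finite_supp supp_subset_carrier by (auto simp: A_def)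
  have "supp (f \<oplus>\<^bsub>RG\<^esub> h) \<subseteq> A"
    using f h by (auto simp: A_def supp_def group_ring_add group_ring_closed)
  then have "((f \<oplus>\<^bsub>RG\<^esub> h) \<otimes>\<^bsub>RG\<^esub> k) x =
      (\<Oplus>\<^bsub>R\<^esub> a \<in> A. (f a \<oplus>\<^bsub>R\<^esub> h a) \<otimes>\<^bsub>R\<^esub> k (inv\<^bsub>G\<^esub> a \<otimes>\<^bsub>G\<^esub> x))"
    using f h k x A by (simp add: group_ring_mult_apply group_ring_add_closed) (simp add: group_ring_add)
  also have "\<dots> = (\<Oplus>\<^bsub>R\<^esub> a \<in> A. f a \<otimes>\<^bsub>R\<^esub> k (inv\<^bsub>G\<^esub> a \<otimes>\<^bsub>G\<^esub> x))
      \<oplus>\<^bsub>R\<^esub> (\<Oplus>\<^bsub>R\<^esub> a \<in> A. h a \<otimes>\<^bsub>R\<^esub> k (inv\<^bsub>G\<^esub> a \<otimes>\<^bsub>G\<^esub> x))"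
    using f h k by (simp add: R.l_distr R.finsum_addf group_ring_closed)
  also have "\<dots> = (f \<otimes>\<^bsub>RG\<^esub> k \<oplus>\<^bsub>RG\<^esub> h \<otimes>\<^bsub>RG\<^esub> k) x"
    using group_ring_mult_apply[OF f k A(1) _ A(2) x] group_ring_mult_apply[OF h k A(1) _ A(2) x]
    by (simp add: group_ring_add A_def)
  finally show "((f \<oplus>\<^bsub>RG\<^esub> h) \<otimes>\<^bsub>RG\<^esub> k) x = (f \<otimes>\<^bsub>RG\<^esub> k \<oplus>\<^bsub>RG\<^esub> h \<otimes>\<^bsub>RG\<^esub> k) x" .
qed (simp_all add: f h k group_ring_add_closed group_ring_mult_closed)

lemma group_ring_r_distr:
  assumes f: "f \<in> carrier RG" and h: "h \<in> carrier RG" and k: "k \<in> carrier RG"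
  shows "k \<otimes>\<^bsub>RG\<^esub> (f \<oplus>\<^bsub>RG\<^esub> h) = k \<otimes>\<^bsub>RG\<^esub> f \<oplus>\<^bsub>RG\<^esub> k \<otimes>\<^bsub>RG\<^esub> h"
proof (rule group_ring_eqI)
  fix x assume x: "x \<in> carrier G"
  have "(k \<otimes>\<^bsub>RG\<^esub> (f \<oplus>\<^bsub>RG\<^esub> h)) x =
      (\<Oplus>\<^bsub>R\<^esub> a \<in> supp k. k a \<otimes>\<^bsub>R\<^esub> (f (inv\<^bsub>G\<^esub> a \<otimes>\<^bsub>G\<^esub> x) \<oplus>\<^bsub>R\<^esub> h (inv\<^bsub>G\<^esub> a \<otimes>\<^bsub>G\<^esub> x)))"
    using x by (simp add: group_ring_mult group_ring_add)
  also have "\<dots> = (\<Oplus>\<^bsub>R\<^esub> a \<in> supp k. k a \<otimes>\<^bsub>R\<^esub> f (inv\<^bsub>G\<^esub> a \<otimes>\<^bsub>G\<^esub> x))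
      \<oplus>\<^bsub>R\<^esub> (\<Oplus>\<^bsub>R\<^esub> a \<in> supp k. k a \<otimes>\<^bsub>R\<^esub> h (inv\<^bsub>G\<^esub> a \<otimes>\<^bsub>G\<^esub> x))"
    using f h k by (simp add: R.r_distr R.finsum_addf group_ring_closed)
  also have "\<dots> = (k \<otimes>\<^bsub>RG\<^esub> f \<oplus>\<^bsub>RG\<^esub> k \<otimes>\<^bsub>RG\<^esub> h) x"
    using x by (simp add: group_ring_add group_ring_mult)
  finally show "(k \<otimes>\<^bsub>RG\<^esub> (f \<oplus>\<^bsub>RG\<^esub> h)) x = (k \<otimes>\<^bsub>RG\<^esub> f \<oplus>\<^bsub>RG\<^esub> k \<otimes>\<^bsub>RG\<^esub> h) x" .
qed (simp_all add: f h k group_ring_add_closed group_ring_mult_closed)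

lemma ring_group_ring: "ring RG"
proof (rule ringI)
  show "monoid RG"
    by (rule monoidI) (simp_all add: group_ring_mult_closed group_ring_one_closed
        group_ring_mult_assoc group_ring_l_one group_ring_r_one)
qed (simp_all add: abelian_group_group_ring group_ring_l_distr group_ring_r_distr)

lemma gr_elem_mult:
  assumes g: "g \<in> carrier G" and h: "h \<in> carrier G"
  shows "gr_elem R g \<otimes>\<^bsub>RG\<^esub> gr_elem R h = gr_elem R (g \<otimes>\<^bsub>G\<^esub> h)"
proof (rule group_ring_eqI)
  fix x assume x: "x \<in> carrier G"
  have "inv\<^bsub>G\<^esub> g \<otimes>\<^bsub>G\<^esub> x = h \<longleftrightarrow> x = g \<otimes>\<^bsub>G\<^esub> h"
    using g h x by (metis G.inv_solve_left)
  then show "(gr_elem R g \<otimes>\<^bsub>RG\<^esub> gr_elem R h) x = gr_elem R (g \<otimes>\<^bsub>G\<^esub> h) x"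
    using g h x by (simp add: gr_elem_mult_apply gr_elem_closed) (simp add: gr_elem_def)
qed (simp_all add: g h gr_elem_closed group_ring_mult_closed)

lemma gr_elem_Units: "g \<in> carrier G \<Longrightarrow> gr_elem R g \<in> Units RG"
  unfolding Units_def
  by (auto intro!: bexI[of _ "gr_elem R (inv\<^bsub>G\<^esub> g)"] simp: gr_elem_closed gr_elem_mult group_ring_one)

end

theorem lemma3p7:
  fixes R :: "('r, 'a) ring_scheme" and G :: "('g, 'b) monoid_scheme"
  assumes "ring R" and "group G" and "DT_ring (group_ring R G)"
  shows "\<forall>g \<in> carrier G.
           \<one>\<^bsub>group_ring R G\<^esub> \<ominus>\<^bsub>group_ring R G\<^esub>
             (gr_elem R g \<otimes>\<^bsub>group_ring R G\<^esub> gr_elem R g) \<in> Delta (group_ring R G)"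
proof
  fix g assume g: "g \<in> carrier G"
  interpret ring_over_group R G
    using assms(1,2) by (rule ring_over_group.intro)
  interpret RG: ring "group_ring R G"
    by (rule ring_group_ring)
  show "\<one>\<^bsub>group_ring R G\<^esub> \<ominus>\<^bsub>group_ring R G\<^esub>
      (gr_elem R g \<otimes>\<^bsub>group_ring R G\<^esub> gr_elem R g) \<in> Delta (group_ring R G)"
    using assms(3) gr_elem_Units[OF g] by (rule RG.DT_ring_one_minus_Units_square)
qed

end
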